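(* Let $S \geq 1$ and, for $i = 1,\dots,S$, let $\boldsymbol{M}_i \in \mathbb{R}^{m_i \times m_i}$ be symmetric positive definite, let $\boldsymbol{K}_i \in \mathbb{R}^{m_i \times m_i}$ be symmetric positive semidefinite, and let $\boldsymbol{C}_i \in \mathbb{R}^{p \times m_i}$ be signed Boolean matrices such that $[\boldsymbol{C}_1 \ \cdots \ \boldsymbol{C}_S]$ has full row rank $p$. Let $0 \leq \gamma \leq 1$ and $\Delta t > 0$, and if $\gamma < 1/2$ assume in addition that $\Delta t \, (1-2\gamma)\, \omega_i^{\max} < 2$ for every $i$, where $\omega_i^{\max}$ is the largest eigenvalue of $\boldsymbol{K}_i \boldsymbol{\phi} = \omega \boldsymbol{M}_i \boldsymbol{\phi}$. Suppose sequences $\boldsymbol{d}_i^{(n)}, \boldsymbol{v}_i^{(n)} \in \mathbb{R}^{m_i}$ and $\boldsymbol{\lambda}^{(n)} \in \mathbb{R}^p$, $n\ge 0$, satisfy (the $\boldsymbol{v}$-continuity method with zero external forcing): for all $n \geq 0$ and all $i$, $\boldsymbol{M}_i \boldsymbol{v}_i^{(n)} + \boldsymbol{K}_i \boldsymbol{d}_i^{(n)} = \boldsymbol{C}_i^{\mathrm{T}} \boldsymbol{\lambda}^{(n)}$ and $\sum_{i=1}^S \boldsymbol{C}_i \boldsymbol{v}_i^{(n)} = \boldsymbol{0}$; and for all $n \geq 1$, $\boldsymbol{d}_i^{(n)} = \boldsymbol{d}_i^{(n-1)} + \Delta t\left((1-\gamma)\boldsymbol{v}_i^{(n-1)} + \gamma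 \boldsymbol{v}_i^{(n)}\right)$. Then the sequences $(\boldsymbol{v}_i^{(n)})_{n}$, $(\boldsymbol{d}_i^{(n+1)} - \boldsymbol{d}_i^{(n)})_{n}$ ($i = 1,\dots,S$) and $(\boldsymbol{\lambda}^{(n+1)} - \boldsymbol{\lambda}^{(n)})_{n}$ are bounded.
   Context: A signed Boolean matrix is a matrix whose entries are in $\{-1,0,+1\}$ and each of whose rows has at most one nonzero entry. A sequence of vectors is bounded if there is a constant $C$ independent of $n$ with $\|\boldsymbol{x}^{(n)}\| < C$ for all $n$. *)

theory Defs
  imports "Jordan_Normal_Form.Matrix" "Jordan_Normal_Form.DL_Rank"
begin

definition vnorm :: "real vec \<Rightarrow> real" where
  "vnorm x = sqrt (x \<bullet> x)"

definition bounded_seq :: "(nat \<Rightarrow> real vec) \<Rightarrow> bool" where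
  "bounded_seq x \<longleftrightarrow> (\<exists>C. \<forall>n. vnorm (x n) < C)"

definition symmetric_mat :: "real mat \<Rightarrow> bool" where
  "symmetric_mat A \<longleftrightarrow> square_mat A \<and> transpose_mat A = A"

definition sym_pos_def :: "real mat \<Rightarrow> bool" where
  "sym_pos_def A \<longleftrightarrow> symmetric_mat A \<and>
     (\<forall>x \<in> carrier_vec (dim_row A). x \<noteq> 0\<^sub>v (dim_row A) \<longrightarrow> x \<bullet> (A *\<^sub>v x) > 0)"

definition sym_pos_semidef :: "real mat \<Rightarrow> bool" where
  "sym_pos_semidef A \<longleftrightarrow> symmetric_mat A \<and>
     (\<forall>x \<in> carrier_vec (dim_row A). x \<bullet> (A *\<^sub>v x) \<ge> 0)"

definition signed_boolean :: "real mat \<Rightarrow> bool" where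
  "signed_boolean A \<longleftrightarrow>
     (\<forall>r < dim_row A. \<forall>c < dim_col A. A $$ (r,c) \<in> {-1, 0, 1}) \<and>
     (\<forall>r < dim_row A. \<forall>c1 < dim_col A. \<forall>c2 < dim_col A.
        A $$ (r,c1) \<noteq> 0 \<longrightarrow> A $$ (r,c2) \<noteq> 0 \<longrightarrow> c1 = c2)"

definition gen_eigenvalues :: "real mat \<Rightarrow> real mat \<Rightarrow> real set" where
  "gen_eigenvalues K M = {\<omega>. \<exists>\<phi> \<in> carrier_vec (dim_col K).
       \<phi> \<noteq> 0\<^sub>v (dim_col K) \<and> K *\<^sub>v \<phi> = \<omega> \<cdot>\<^sub>v (M *\<^sub>v \<phi>)}"

definition omega_max :: "real mat \<Rightarrow> real mat \<Rightarrow> real" where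
  "omega_max K M = Max (gen_eigenvalues K M)"

definition hblock :: "nat \<Rightarrow> nat \<Rightarrow> (nat \<Rightarrow> real mat) \<Rightarrow> real mat" where
  "hblock p S C = mat_of_cols p (concat (map (\<lambda>i. cols (C i)) [1..<S+1]))"

end

theory Submission
  imports Defs "Jordan_Normal_Form.Char_Poly" "HOL-Analysis.Function_Topology"
begin

text \<open>With \<open>\<alpha> = (1/2 - \<gamma>) \<Delta>t\<close>, the discrete energy \<open>E\<^sub>n = \<Sum>\<^sub>i v\<^sub>i \<bullet> M\<^sub>i v\<^sub>i - \<alpha> v\<^sub>i \<bullet> K\<^sub>i v\<^sub>i\<close>
  is nonincreasing: testing the dynamic equations at two consecutive steps with both velocities
  shows that \<open>E\<^sub>n\<^sub>+\<^sub>1 - E\<^sub>n\<close> equals the interface work \<open>\<Sum>\<^sub>i v\<^sub>i \<bullet> C\<^sub>i\<^sup>T (\<lambda>\<^sub>n\<^sub>+\<^sub>1 - \<lambda>\<^sub>n)\<close>, which the velocity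
  constraint annihilates, minus the dissipation \<open>\<Delta>t/2 (v\<^sub>n + v\<^sub>n\<^sub>+\<^sub>1) \<bullet> K (v\<^sub>n + v\<^sub>n\<^sub>+\<^sub>1) \<ge> 0\<close>.
  The stability condition makes \<open>M\<^sub>i - \<alpha> K\<^sub>i\<close> positive definite, so \<open>E\<close> controls the velocities;
  the update rule then bounds the displacement increments, and
  \<open>C\<^sub>i\<^sup>T (\<lambda>\<^sub>n\<^sub>+\<^sub>1 - \<lambda>\<^sub>n) = M\<^sub>i (v\<^sub>n\<^sub>+\<^sub>1 - v\<^sub>n) + K\<^sub>i (d\<^sub>n\<^sub>+\<^sub>1 - d\<^sub>n)\<close> together with the full row rank of
  \<open>[C\<^sub>1 \<cdots> C\<^sub>S]\<close> bounds the multiplier increments. All norm equivalences come from compactness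
  of the unit sphere.\<close>

section \<open>Norm equivalences by compactness\<close>

lemma scalar_prod_self_nonneg: "0 \<le> (x :: real vec) \<bullet> x"
  using conjugate_square_ge_0_vec[of x] by simp

lemma scalar_prod_self_pos:
  assumes "(x :: real vec) \<in> carrier_vec n" "x \<noteq> 0\<^sub>v n"
  shows "0 < x \<bullet> x"
  using conjugate_square_greater_0_vec[OF assms(1)] assms(2) by simp

lemma scalar_prod_self_eq_0_iff:
  assumes "(x :: real vec) \<in> carrier_vec n"
  shows "x \<bullet> x = 0 \<longleftrightarrow> x = 0\<^sub>v n"
  using conjugate_square_eq_0_vec[OF assms] by simp

lemma scalar_prod_add_self_le:
  assumes x: "(x :: real vec) \<in> carrier_vec n" and y: "y \<in> carrier_vec n"
  shows "(x + y) \<bullet> (x + y) \<le> 2 * (x \<bullet> x) + 2 * (y \<bullet> y)"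
proof -
  have "(x + y) \<bullet> (x + y) + (x - y) \<bullet> (x - y) = 2 * (x \<bullet> x) + 2 * (y \<bullet> y)"
    using x y comm_scalar_prod[OF y x]
    by (simp add: add_scalar_prod_distrib[of _ n] scalar_prod_add_distrib[of _ n]
        minus_scalar_prod_distrib[of _ n] scalar_prod_minus_distrib[of _ n])
  then show ?thesis using scalar_prod_self_nonneg[of "x - y"] by linarith
qed

lemma scalar_prod_diff_self_le:
  assumes x: "(x :: real vec) \<in> carrier_vec n" and y: "y \<in> carrier_vec n"
  shows "(x - y) \<bullet> (x - y) \<le> 2 * (x \<bullet> x) + 2 * (y \<bullet> y)"
proof -
  have "(x + y) \<bullet> (x + y) + (x - y) \<bullet> (x - y) = 2 * (x \<bullet> x) + 2 * (y \<bullet> y)"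
    using x y comm_scalar_prod[OF y x]
    by (simp add: add_scalar_prod_distrib[of _ n] scalar_prod_add_distrib[of _ n]
        minus_scalar_prod_distrib[of _ n] scalar_prod_minus_distrib[of _ n])
  then show ?thesis using scalar_prod_self_nonneg[of "x + y"] by linarith
qed

lemma bounded_seq_if_scalar_prod_bounded:
  assumes "\<exists>B. \<forall>n. x n \<bullet> x n \<le> B"
  shows "bounded_seq x"
proof -
  obtain B where B: "\<And>n. x n \<bullet> x n \<le> B" using assms by blast
  show ?thesis unfolding bounded_seq_def vnorm_def
  proof (intro exI allI)
    fix n
    have "sqrt (x n \<bullet> x n) \<le> sqrt (max B 0)"
      using B[of n] by (intro real_sqrt_le_mono) simp
    then show "sqrt (x n \<bullet> x n) < sqrt (max B 0) + 1" by linarith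
  qed
qed

lemma unit_vector_decomposition:
  assumes x: "(x :: real vec) \<in> carrier_vec n" "x \<noteq> 0\<^sub>v n"
  obtains y where "y \<in> carrier_vec n" "y \<bullet> y = 1" "x = sqrt (x \<bullet> x) \<cdot>\<^sub>v y"
proof
  define r where "r = sqrt (x \<bullet> x)"
  have r: "r > 0" "r * r = x \<bullet> x"
    using scalar_prod_self_pos[OF x] unfolding r_def by (auto simp: real_sqrt_mult[symmetric])
  show "(1 / r) \<cdot>\<^sub>v x \<in> carrier_vec n" using x by simp
  show "((1 / r) \<cdot>\<^sub>v x) \<bullet> ((1 / r) \<cdot>\<^sub>v x) = 1" using x r(1) by (simp add: field_simps flip: r(2))
  show "x = r \<cdot>\<^sub>v ((1 / r) \<cdot>\<^sub>v x)" using r by (simp add: smult_smult_assoc)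
qed

lemma continuous_attains_min_on_unit_sphere:
  fixes g :: "real vec \<Rightarrow> real"
  assumes n: "n > 0" and cont: "continuous_on {f. vec n f \<bullet> vec n f = 1} (\<lambda>f. g (vec n f))"
  obtains u where "u \<in> carrier_vec n" "u \<bullet> u = 1"
    "\<And>y. y \<in> carrier_vec n \<Longrightarrow> y \<bullet> y = 1 \<Longrightarrow> g u \<le> g y"
proof -
  have sq: "vec n f \<bullet> vec n f = (\<Sum>j<n. (f j)\<^sup>2)" for f :: "nat \<Rightarrow> real"
    unfolding scalar_prod_def lessThan_atLeast0 by (intro sum.cong) (auto simp: power2_eq_square)
  \<comment> \<open>The unit sphere, embedded in the product space \<open>nat \<Rightarrow> real\<close> where compactness is available.\<close>
  define T where "T = {f :: nat \<Rightarrow> real. (\<forall>j\<ge>n. f j = 0) \<and> vec n f \<bullet> vec n f = 1}"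
  define B where "B = PiE UNIV (\<lambda>j :: nat. if j < n then {-1..1 :: real} else {0})"
  have "compactin (product_topology (\<lambda>i. euclidean) UNIV) B"
    unfolding B_def by (subst compactin_PiE) auto
  then have "compact B" by (simp add: euclidean_product_topology)
  moreover have "T \<subseteq> B"
  proof
    fix f assume f: "f \<in> T"
    have "\<bar>f j\<bar> \<le> 1" if "j < n" for j
    proof -
      have "(f j)\<^sup>2 \<le> (\<Sum>j<n. (f j)\<^sup>2)" using that by (intro member_le_sum) auto
      then show ?thesis using f sq unfolding T_def by (simp add: abs_square_le_1)
    qed
    then show "f \<in> B" using f unfolding B_def T_def by (auto simp: abs_le_iff)
  qed
  moreover have "closed T"
  proof -
    have "T = (\<Inter>j\<in>{n..}. {f. f j = 0}) \<inter> {f. (\<Sum>j<n. (f j)\<^sup>2) = 1}"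
      unfolding T_def sq by auto
    moreover have "closed {f :: nat \<Rightarrow> real. f j = 0}" for j
      by (rule closed_Collect_eq) (auto intro!: continuous_intros)
    moreover have "closed {f :: nat \<Rightarrow> real. (\<Sum>j<n. (f j)\<^sup>2) = 1}"
      by (rule closed_Collect_eq) (auto intro!: continuous_intros)
    ultimately show ?thesis by auto
  qed
  ultimately have "compact T" by (metis compact_Int_closed inf.absorb_iff2)
  moreover have "(\<lambda>j. if j = 0 then 1 else 0) \<in> T"
  proof -
    have "(\<Sum>j<n. (if j = 0 then 1 else 0 :: real)\<^sup>2) = (\<Sum>j<n. if j = 0 then 1 else 0)"
      by (intro sum.cong) auto
    then show ?thesis using n unfolding T_def sq by simp
  qed
  moreover have "continuous_on T (\<lambda>f. g (vec n f))"
    using cont by (rule continuous_on_subset) (auto simp: T_def)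
  ultimately obtain f0 where f0: "f0 \<in> T" "\<And>f. f \<in> T \<Longrightarrow> g (vec n f0) \<le> g (vec n f)"
    using continuous_attains_inf[of T "\<lambda>f. g (vec n f)"] by blast
  show ?thesis
  proof
    show "vec n f0 \<in> carrier_vec n" "vec n f0 \<bullet> vec n f0 = 1" using f0(1) by (auto simp: T_def)
    fix y :: "real vec" assume y: "y \<in> carrier_vec n" "y \<bullet> y = 1"
    define f where "f = (\<lambda>j. if j < n then y $ j else 0)"
    have "vec n f = y" using y(1) unfolding f_def by auto
    moreover have "f \<in> T" using y \<open>vec n f = y\<close> unfolding T_def f_def by auto
    ultimately show "g (vec n f0) \<le> g y" using f0(2) by metis
  qed
qed

lemma homogeneous_zero:
  assumes "\<And>a x. x \<in> carrier_vec n \<Longrightarrow> g (a \<cdot>\<^sub>v x) = a\<^sup>2 * (g x :: real)"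
  shows "g (0\<^sub>v n) = 0"
proof -
  have "0 \<cdot>\<^sub>v 0\<^sub>v n = (0\<^sub>v n :: real vec)" by (intro eq_vecI) auto
  then show ?thesis using assms[of "0\<^sub>v n" 0] by simp
qed

lemma homogeneous_sphere_bound:
  fixes g :: "real vec \<Rightarrow> real"
  assumes n: "n > 0"
    and hom: "\<And>a x. x \<in> carrier_vec n \<Longrightarrow> g (a \<cdot>\<^sub>v x) = a\<^sup>2 * g x"
    and cont: "continuous_on UNIV (\<lambda>f. g (vec n f))"
  obtains u where "u \<in> carrier_vec n" "u \<bullet> u = 1" "\<And>x. x \<in> carrier_vec n \<Longrightarrow> g u * (x \<bullet> x) \<le> g x"
proof -
  obtain u where u: "u \<in> carrier_vec n" "u \<bullet> u = 1"
    and min: "\<And>y. y \<in> carrier_vec n \<Longrightarrow> y \<bullet> y = 1 \<Longrightarrow> g u \<le> g y"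
    using continuous_attains_min_on_unit_sphere[OF n continuous_on_subset[OF cont]] by blast
  have "g u * (x \<bullet> x) \<le> g x" if x: "x \<in> carrier_vec n" for x
  proof (cases "x = 0\<^sub>v n")
    case True
    then show ?thesis using homogeneous_zero[OF hom] by simp
  next
    case False
    then obtain y where y: "y \<in> carrier_vec n" "y \<bullet> y = 1" "x = sqrt (x \<bullet> x) \<cdot>\<^sub>v y"
      using unit_vector_decomposition[OF x] by blast
    have "g x = (x \<bullet> x) * g y"
      using hom[OF y(1), of "sqrt (x \<bullet> x)"] y(3) scalar_prod_self_nonneg[of x] by simp
    then show ?thesis using min[OF y(1,2)] scalar_prod_self_nonneg[of x] by (metis mult.commute mult_right_mono)
  qed
  with u show ?thesis using that by blast
qed

lemma homogeneous_coercive: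
  fixes g :: "real vec \<Rightarrow> real"
  assumes pos: "\<And>x. x \<in> carrier_vec n \<Longrightarrow> x \<noteq> 0\<^sub>v n \<Longrightarrow> g x > 0"
    and hom: "\<And>a x. x \<in> carrier_vec n \<Longrightarrow> g (a \<cdot>\<^sub>v x) = a\<^sup>2 * g x"
    and cont: "continuous_on UNIV (\<lambda>f. g (vec n f))"
  shows "\<exists>c>0. \<forall>x\<in>carrier_vec n. c * (x \<bullet> x) \<le> g x"
proof (cases "n = 0")
  case True
  then have "x = 0\<^sub>v n" if "x \<in> carrier_vec n" for x :: "real vec"
    using that True by (intro eq_vecI) auto
  then show ?thesis using homogeneous_zero[of n g, OF hom] by (intro exI[of _ 1]) force
next
  case False
  then obtain u where u: "u \<in> carrier_vec n" "u \<bullet> u = 1" "\<And>x. x \<in> carrier_vec n \<Longrightarrow> g u * (x \<bullet> x) \<le> g x"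
    using homogeneous_sphere_bound[OF _ hom cont] by blast
  moreover have "g u > 0" using pos[OF u(1)] u(2) scalar_prod_self_eq_0_iff[OF u(1)] by auto
  ultimately show ?thesis by blast
qed

lemma homogeneous_bounded_above:
  fixes g :: "real vec \<Rightarrow> real"
  assumes hom: "\<And>a x. x \<in> carrier_vec n \<Longrightarrow> g (a \<cdot>\<^sub>v x) = a\<^sup>2 * g x"
    and cont: "continuous_on UNIV (\<lambda>f. g (vec n f))"
  shows "\<exists>c. \<forall>x\<in>carrier_vec n. g x \<le> c * (x \<bullet> x)"
proof (cases "n = 0")
  case True
  then have "x = 0\<^sub>v n" if "x \<in> carrier_vec n" for x :: "real vec"
    using that True by (intro eq_vecI) auto
  then show ?thesis using homogeneous_zero[of n g, OF hom] by (intro exI[of _ 0]) force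
next
  case False
  have "continuous_on UNIV (\<lambda>f. - g (vec n f))" using cont by (intro continuous_intros)
  moreover have "\<And>a x. x \<in> carrier_vec n \<Longrightarrow> - g (a \<cdot>\<^sub>v x) = a\<^sup>2 * - g x" using hom by simp
  ultimately obtain u where "\<And>x. x \<in> carrier_vec n \<Longrightarrow> - g u * (x \<bullet> x) \<le> - g x"
    using homogeneous_sphere_bound[of n "\<lambda>x. - g x"] False by blast
  then show ?thesis by (intro exI[of _ "g u"]) auto
qed

lemma continuous_on_mat_vec_scalar_prod:
  assumes A: "(A :: real mat) \<in> carrier_mat k n" and B: "B \<in> carrier_mat k n"
  shows "continuous_on UNIV (\<lambda>f. (A *\<^sub>v vec n f) \<bullet> (B *\<^sub>v vec n f))"
proof -
  have "(A *\<^sub>v vec n f) \<bullet> (B *\<^sub>v vec n f) =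
      (\<Sum>r<k. (\<Sum>j<n. A $$ (r, j) * f j) * (\<Sum>j<n. B $$ (r, j) * f j))" for f
    using A B unfolding scalar_prod_def mult_mat_vec_def row_def lessThan_atLeast0
    by (auto intro!: sum.cong)
  then show ?thesis
    by (simp add: continuous_on_product_coordinates continuous_intros)
qed

lemma continuous_on_quadratic_form:
  assumes "(A :: real mat) \<in> carrier_mat n n"
  shows "continuous_on UNIV (\<lambda>f. vec n f \<bullet> (A *\<^sub>v vec n f))"
  using continuous_on_mat_vec_scalar_prod[OF one_carrier_mat assms] by simp

lemma mat_vec_scalar_prod_smult:
  assumes "(A :: real mat) \<in> carrier_mat k n" "B \<in> carrier_mat k n" "x \<in> carrier_vec n"
  shows "(A *\<^sub>v (a \<cdot>\<^sub>v x)) \<bullet> (B *\<^sub>v (a \<cdot>\<^sub>v x)) = a\<^sup>2 * ((A *\<^sub>v x) \<bullet> (B *\<^sub>v x))"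
  using assms by (simp add: mult_mat_vec power2_eq_square)

lemma quadratic_form_smult:
  assumes "(A :: real mat) \<in> carrier_mat n n" "x \<in> carrier_vec n"
  shows "(a \<cdot>\<^sub>v x) \<bullet> (A *\<^sub>v (a \<cdot>\<^sub>v x)) = a\<^sup>2 * (x \<bullet> (A *\<^sub>v x))"
  using assms by (simp add: mult_mat_vec power2_eq_square)

lemma mat_vec_norm_bound:
  assumes "(A :: real mat) \<in> carrier_mat k n"
  obtains c where "c \<ge> 0" "\<And>x. x \<in> carrier_vec n \<Longrightarrow> (A *\<^sub>v x) \<bullet> (A *\<^sub>v x) \<le> c * (x \<bullet> x)"
proof -
  have "\<exists>c. \<forall>x\<in>carrier_vec n. (A *\<^sub>v x) \<bullet> (A *\<^sub>v x) \<le> c * (x \<bullet> x)"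
    using assms by (intro homogeneous_bounded_above mat_vec_scalar_prod_smult
        continuous_on_mat_vec_scalar_prod)
  then obtain c where c: "\<forall>x\<in>carrier_vec n. (A *\<^sub>v x) \<bullet> (A *\<^sub>v x) \<le> c * (x \<bullet> x)" by blast
  have "c * (x \<bullet> x) \<le> max c 0 * (x \<bullet> x)" for x :: "real vec"
    using scalar_prod_self_nonneg by (intro mult_right_mono) auto
  then show ?thesis using that[of "max c 0"] c by (meson max.cobounded2 order_trans)
qed

section \<open>Symmetric forms and generalized eigenvalues\<close>

lemma symmetric_bilinear_swap:
  assumes A: "(A :: real mat) \<in> carrier_mat n n" "transpose_mat A = A"
    and u: "u \<in> carrier_vec n" and w: "w \<in> carrier_vec n"
  shows "u \<bullet> (A *\<^sub>v w) = w \<bullet> (A *\<^sub>v u)"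
  using transpose_vec_mult_scalar[OF A(1) w u] comm_scalar_prod[of "A *\<^sub>v u" n w] A u w by simp

lemma quadratic_form_add_smult:
  assumes A: "(A :: real mat) \<in> carrier_mat n n" "transpose_mat A = A"
    and u: "u \<in> carrier_vec n" and w: "w \<in> carrier_vec n"
  shows "(u + t \<cdot>\<^sub>v w) \<bullet> (A *\<^sub>v (u + t \<cdot>\<^sub>v w)) =
     u \<bullet> (A *\<^sub>v u) + 2 * t * (w \<bullet> (A *\<^sub>v u)) + t\<^sup>2 * (w \<bullet> (A *\<^sub>v w))"
  using A u w symmetric_bilinear_swap[OF A u w]
  by (simp add: mult_add_distrib_mat_vec[OF A(1)] mult_mat_vec[OF A(1)] add_scalar_prod_distrib[of _ n]
      scalar_prod_add_distrib[of _ n] power2_eq_square algebra_simps)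

text \<open>A null vector of a positive semidefinite form lies in its kernel: otherwise the form
  would be negative at \<open>u + t \<cdot> A u\<close> for a suitable \<open>t < 0\<close>.\<close>
lemma psd_quadratic_form_zero_imp_kernel:
  assumes A: "(A :: real mat) \<in> carrier_mat n n" "transpose_mat A = A"
    and psd: "\<And>x. x \<in> carrier_vec n \<Longrightarrow> 0 \<le> x \<bullet> (A *\<^sub>v x)"
    and u: "u \<in> carrier_vec n" "u \<bullet> (A *\<^sub>v u) = 0"
  shows "A *\<^sub>v u = 0\<^sub>v n"
proof (rule ccontr)
  define w where "w = A *\<^sub>v u"
  have w: "w \<in> carrier_vec n" using A u unfolding w_def by simp
  assume "A *\<^sub>v u \<noteq> 0\<^sub>v n"
  then have a: "w \<bullet> w > 0" using scalar_prod_self_pos[OF w] unfolding w_def by simp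
  define b where "b = w \<bullet> (A *\<^sub>v w)"
  define t where "t = - (w \<bullet> w) / (b + 1)"
  have b: "b \<ge> 0" using psd[OF w] unfolding b_def .
  have t: "t < 0" "t * b = - (w \<bullet> w) - t" using a b unfolding t_def by (auto simp: field_simps)
  have "t\<^sup>2 * b = t * (t * b)" unfolding power2_eq_square by (rule mult.assoc)
  then have "2 * t * (w \<bullet> w) + t\<^sup>2 * b = t * (w \<bullet> w) - t\<^sup>2"
    unfolding t(2) by (simp add: algebra_simps power2_eq_square)
  moreover have "t * (w \<bullet> w) < 0" using t(1) a by (rule mult_neg_pos)
  ultimately have "2 * t * (w \<bullet> w) + t\<^sup>2 * b < 0" using zero_le_power2[of t] by linarith
  moreover have "0 \<le> (u + t \<cdot>\<^sub>v w) \<bullet> (A *\<^sub>v (u + t \<cdot>\<^sub>v w))" using psd u w by simp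
  ultimately show False
    using quadratic_form_add_smult[OF A u(1) w, of t] u(2) unfolding w_def b_def by simp
qed

lemma gen_eigenvalues_finite:
  assumes M: "(M :: real mat) \<in> carrier_mat n n" and K: "K \<in> carrier_mat n n"
    and pd: "sym_pos_def M"
  shows "finite (gen_eigenvalues K M)"
proof -
  have "det M \<noteq> 0"
  proof
    assume "det M = 0"
    then obtain x where x: "x \<in> carrier_vec n" "x \<noteq> 0\<^sub>v n" "M *\<^sub>v x = 0\<^sub>v n"
      using det_0_iff_vec_prod_zero[OF M] by blast
    moreover have "x \<bullet> (M *\<^sub>v x) > 0" using pd M x(1,2) unfolding sym_pos_def_def by auto
    ultimately show False using x(1) by simp
  qed
  then have "M \<in> Units (ring_mat TYPE(real) n undefined)" by (rule det_non_zero_imp_unit[OF M])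
  then obtain Mi where Mi: "Mi \<in> carrier_mat n n" "Mi * M = 1\<^sub>m n"
    unfolding Units_def ring_mat_def by auto
  have "gen_eigenvalues K M \<subseteq> {k. poly (char_poly (Mi * K)) k = 0}"
  proof
    fix k assume "k \<in> gen_eigenvalues K M"
    then obtain \<phi> where \<phi>: "\<phi> \<in> carrier_vec n" "\<phi> \<noteq> 0\<^sub>v n" "K *\<^sub>v \<phi> = k \<cdot>\<^sub>v (M *\<^sub>v \<phi>)"
      unfolding gen_eigenvalues_def using K by auto
    have "(Mi * M) *\<^sub>v \<phi> = \<phi>" unfolding Mi(2) using \<phi>(1) by simp
    then have "Mi *\<^sub>v (M *\<^sub>v \<phi>) = \<phi>" by (simp add: assoc_mult_mat_vec[OF Mi(1) M \<phi>(1)])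
    moreover have "(Mi * K) *\<^sub>v \<phi> = k \<cdot>\<^sub>v (Mi *\<^sub>v (M *\<^sub>v \<phi>))"
      using M \<phi> by (simp add: assoc_mult_mat_vec[OF Mi(1) K \<phi>(1)] mult_mat_vec[OF Mi(1)])
    ultimately have "(Mi * K) *\<^sub>v \<phi> = k \<cdot>\<^sub>v \<phi>" by simp
    then have "eigenvector (Mi * K) \<phi> k" unfolding eigenvector_def using \<phi> Mi K by simp
    then have "eigenvalue (Mi * K) k" unfolding eigenvalue_def by blast
    then show "k \<in> {k. poly (char_poly (Mi * K)) k = 0}"
      using eigenvalue_root_char_poly[of "Mi * K" n] Mi K by simp
  qed
  moreover have "char_poly (Mi * K) \<noteq> 0"
    using degree_monic_char_poly[of "Mi * K" n] Mi K by auto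
  ultimately show ?thesis using finite_subset poly_roots_finite by blast
qed

lemma smult_minus_mat_mult_vec:
  assumes "(M :: real mat) \<in> carrier_mat n n" "K \<in> carrier_mat n n" "x \<in> carrier_vec n"
  shows "(\<omega> \<cdot>\<^sub>m M - K) *\<^sub>v x = \<omega> \<cdot>\<^sub>v (M *\<^sub>v x) - K *\<^sub>v x"
proof -
  have "(\<omega> \<cdot>\<^sub>m M) *\<^sub>v x = \<omega> \<cdot>\<^sub>v (M *\<^sub>v x)" using assms by (intro eq_vecI) auto
  then show ?thesis using assms by (simp add: minus_mult_distrib_mat_vec[of _ n n])
qed

lemma rayleigh_quotient_attains_max:
  assumes M: "(M :: real mat) \<in> carrier_mat n n" and K: "K \<in> carrier_mat n n" and n: "n > 0"
    and pd: "sym_pos_def M"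
  obtains u where "u \<in> carrier_vec n" "u \<noteq> 0\<^sub>v n"
    "\<And>x. x \<in> carrier_vec n \<Longrightarrow> x \<bullet> (K *\<^sub>v x) \<le> u \<bullet> (K *\<^sub>v u) / (u \<bullet> (M *\<^sub>v u)) * (x \<bullet> (M *\<^sub>v x))"
proof -
  have Mpos: "0 < x \<bullet> (M *\<^sub>v x)" if "x \<in> carrier_vec n" "x \<noteq> 0\<^sub>v n" for x
    using pd M that unfolding sym_pos_def_def by auto
  define q where "q x = - (x \<bullet> (K *\<^sub>v x) / (x \<bullet> (M *\<^sub>v x)))" for x
  have "vec n f \<bullet> (M *\<^sub>v vec n f) \<noteq> 0" if "vec n f \<bullet> vec n f = 1" for f
    using Mpos[of "vec n f"] that by fastforce
  then have "continuous_on {f. vec n f \<bullet> vec n f = 1} (\<lambda>f. q (vec n f))"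
    unfolding q_def
    by (intro continuous_intros continuous_on_subset[OF continuous_on_quadratic_form[OF K]]
        continuous_on_subset[OF continuous_on_quadratic_form[OF M]]) auto
  then obtain u where u: "u \<in> carrier_vec n" "u \<bullet> u = 1"
    and max: "\<And>y. y \<in> carrier_vec n \<Longrightarrow> y \<bullet> y = 1 \<Longrightarrow> q u \<le> q y"
    using continuous_attains_min_on_unit_sphere[OF n] by blast
  define \<omega> where "\<omega> = u \<bullet> (K *\<^sub>v u) / (u \<bullet> (M *\<^sub>v u))"
  have "x \<bullet> (K *\<^sub>v x) \<le> \<omega> * (x \<bullet> (M *\<^sub>v x))" if x: "x \<in> carrier_vec n" for x
  proof (cases "x = 0\<^sub>v n")
    case True
    then show ?thesis using M K by simp
  next
    case False
    then obtain y where y: "y \<in> carrier_vec n" "y \<bullet> y = 1" "x = sqrt (x \<bullet> x) \<cdot>\<^sub>v y"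
      using unit_vector_decomposition[OF x] by blast
    have "0 < y \<bullet> (M *\<^sub>v y)" using Mpos[OF y(1)] y(2) by fastforce
    then have "y \<bullet> (K *\<^sub>v y) \<le> \<omega> * (y \<bullet> (M *\<^sub>v y))"
      using max[OF y(1,2)] unfolding q_def \<omega>_def by (simp add: divide_le_eq)
    then have "(x \<bullet> x) * (y \<bullet> (K *\<^sub>v y)) \<le> (x \<bullet> x) * (\<omega> * (y \<bullet> (M *\<^sub>v y)))"
      by (rule mult_left_mono) (rule scalar_prod_self_nonneg)
    then show ?thesis
      using quadratic_form_smult[OF K y(1), of "sqrt (x \<bullet> x)"]
        quadratic_form_smult[OF M y(1), of "sqrt (x \<bullet> x)"] y(3) scalar_prod_self_nonneg[of x]
      by (simp add: algebra_simps)
  qed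
  moreover have "u \<noteq> 0\<^sub>v n" using u(2) by auto
  ultimately show ?thesis using that u(1) unfolding \<omega>_def by blast
qed

text \<open>The maximiser \<open>u\<close> of the Rayleigh quotient makes \<open>\<omega> M - K\<close> positive semidefinite
  with \<open>u\<close> as a null vector; hence \<open>K u = \<omega> M u\<close>.\<close>
lemma gen_eigenvalue_bounds_rayleigh_quotient:
  assumes M: "(M :: real mat) \<in> carrier_mat n n" and K: "K \<in> carrier_mat n n" and n: "n > 0"
    and pd: "sym_pos_def M" and Ks: "symmetric_mat K"
  obtains \<omega> where "\<omega> \<in> gen_eigenvalues K M"
    "\<And>x. x \<in> carrier_vec n \<Longrightarrow> x \<bullet> (K *\<^sub>v x) \<le> \<omega> * (x \<bullet> (M *\<^sub>v x))"
proof -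
  obtain u where u: "u \<in> carrier_vec n" "u \<noteq> 0\<^sub>v n"
    and le: "\<And>x. x \<in> carrier_vec n \<Longrightarrow> x \<bullet> (K *\<^sub>v x) \<le> u \<bullet> (K *\<^sub>v u) / (u \<bullet> (M *\<^sub>v u)) * (x \<bullet> (M *\<^sub>v x))"
    using rayleigh_quotient_attains_max[OF M K n pd] by blast
  define \<omega> where "\<omega> = u \<bullet> (K *\<^sub>v u) / (u \<bullet> (M *\<^sub>v u))"
  have Mu: "0 < u \<bullet> (M *\<^sub>v u)" using pd M u unfolding sym_pos_def_def by auto
  define A where "A = \<omega> \<cdot>\<^sub>m M - K"
  have A: "A \<in> carrier_mat n n" using M K unfolding A_def by (simp add: minus_carrier_mat)
  have Av: "x \<bullet> (A *\<^sub>v x) = \<omega> * (x \<bullet> (M *\<^sub>v x)) - x \<bullet> (K *\<^sub>v x)" if "x \<in> carrier_vec n" for x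
    using smult_minus_mat_mult_vec[OF M K that] M K that unfolding A_def
    by (simp add: scalar_prod_minus_distrib[of _ n])
  have "transpose_mat (\<omega> \<cdot>\<^sub>m M) = \<omega> \<cdot>\<^sub>m transpose_mat M" by (intro eq_matI) auto
  then have "transpose_mat A = A"
    using pd Ks M K unfolding A_def sym_pos_def_def symmetric_mat_def
    by (simp add: transpose_minus[of _ n n])
  moreover have "u \<bullet> (A *\<^sub>v u) = 0" using Av[OF u(1)] Mu unfolding \<omega>_def by simp
  ultimately have Au: "A *\<^sub>v u = 0\<^sub>v n"
    using psd_quadratic_form_zero_imp_kernel[OF A _ _ u(1)] Av le unfolding \<omega>_def by simp
  have "K *\<^sub>v u = \<omega> \<cdot>\<^sub>v (M *\<^sub>v u)"
  proof (rule eq_vecI)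
    fix i assume "i < dim_vec (\<omega> \<cdot>\<^sub>v (M *\<^sub>v u))"
    then have "i < n" using M by simp
    then show "(K *\<^sub>v u) $ i = (\<omega> \<cdot>\<^sub>v (M *\<^sub>v u)) $ i"
      using arg_cong[OF Au, of "\<lambda>v. v $ i"] smult_minus_mat_mult_vec[OF M K u(1)] M K
      unfolding A_def by simp
  qed (use M K in simp)
  then have "\<omega> \<in> gen_eigenvalues K M" unfolding gen_eigenvalues_def using K u by auto
  with le show ?thesis using that unfolding \<omega>_def by blast
qed

lemma quadratic_form_le_omega_max:
  assumes M: "(M :: real mat) \<in> carrier_mat n n" and K: "K \<in> carrier_mat n n"
    and pd: "sym_pos_def M" and Ks: "symmetric_mat K" and x: "x \<in> carrier_vec n"
  shows "x \<bullet> (K *\<^sub>v x) \<le> omega_max K M * (x \<bullet> (M *\<^sub>v x))"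
proof (cases "n = 0")
  case True
  then have "x = 0\<^sub>v n" using x by (intro eq_vecI) auto
  then show ?thesis using M K by simp
next
  case False
  then obtain \<omega> where \<omega>: "\<omega> \<in> gen_eigenvalues K M"
    and le: "x \<bullet> (K *\<^sub>v x) \<le> \<omega> * (x \<bullet> (M *\<^sub>v x))"
    using gen_eigenvalue_bounds_rayleigh_quotient[OF M K _ pd Ks] x by blast
  have "\<omega> \<le> omega_max K M"
    unfolding omega_max_def using gen_eigenvalues_finite[OF M K pd] \<omega> by simp
  moreover have "0 \<le> x \<bullet> (M *\<^sub>v x)"
    using pd M x unfolding sym_pos_def_def by (cases "x = 0\<^sub>v n") (auto intro: less_imp_le)
  ultimately show ?thesis using le by (meson mult_right_mono order_trans)
qed

lemma stable_energy_form_coercive: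
  assumes M: "(M :: real mat) \<in> carrier_mat n n" and K: "K \<in> carrier_mat n n"
    and pd: "sym_pos_def M" and psd: "sym_pos_semidef K"
    and stable: "0 < \<alpha> \<Longrightarrow> \<alpha> * omega_max K M < 1"
  shows "\<exists>c>0. \<forall>x\<in>carrier_vec n. c * (x \<bullet> x) \<le> x \<bullet> (M *\<^sub>v x) - \<alpha> * (x \<bullet> (K *\<^sub>v x))"
proof (rule homogeneous_coercive)
  fix x :: "real vec" assume x: "x \<in> carrier_vec n" "x \<noteq> 0\<^sub>v n"
  have Mx: "0 < x \<bullet> (M *\<^sub>v x)" using pd M x unfolding sym_pos_def_def by auto
  have Kx: "0 \<le> x \<bullet> (K *\<^sub>v x)" using psd K x unfolding sym_pos_semidef_def by auto
  show "0 < x \<bullet> (M *\<^sub>v x) - \<alpha> * (x \<bullet> (K *\<^sub>v x))"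
  proof (cases "0 < \<alpha>")
    case True
    have "\<alpha> * (x \<bullet> (K *\<^sub>v x)) \<le> \<alpha> * omega_max K M * (x \<bullet> (M *\<^sub>v x))"
      using quadratic_form_le_omega_max[OF M K pd _ x(1)] psd True
      unfolding sym_pos_semidef_def by (simp add: mult.assoc)
    also have "\<dots> < x \<bullet> (M *\<^sub>v x)" using stable[OF True] Mx by simp
    finally show ?thesis by simp
  next
    case False
    then have "\<alpha> * (x \<bullet> (K *\<^sub>v x)) \<le> 0" using Kx by (simp add: mult_nonpos_nonneg)
    then show ?thesis using Mx by simp
  qed
next
  show "\<And>a x. x \<in> carrier_vec n \<Longrightarrow> (a \<cdot>\<^sub>v x) \<bullet> (M *\<^sub>v (a \<cdot>\<^sub>v x)) - \<alpha> * ((a \<cdot>\<^sub>v x) \<bullet> (K *\<^sub>v (a \<cdot>\<^sub>v x)))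
      = a\<^sup>2 * (x \<bullet> (M *\<^sub>v x) - \<alpha> * (x \<bullet> (K *\<^sub>v x)))"
    using quadratic_form_smult[OF M] quadratic_form_smult[OF K] by (simp add: algebra_simps)
  show "continuous_on UNIV (\<lambda>f. vec n f \<bullet> (M *\<^sub>v vec n f) - \<alpha> * (vec n f \<bullet> (K *\<^sub>v vec n f)))"
    using continuous_on_quadratic_form[OF M] continuous_on_quadratic_form[OF K]
    by (intro continuous_intros)
qed

section \<open>The interface matrix\<close>

lemma full_row_rank_orthogonal_imp_zero:
  assumes H: "(H :: real mat) \<in> carrier_mat p N" and rank: "vec_space.rank p H = p"
    and x: "x \<in> carrier_vec p" and orth: "\<And>y. y \<in> set (cols H) \<Longrightarrow> y \<bullet> x = 0"
  shows "x = 0\<^sub>v p"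
proof -
  interpret vec_space "TYPE(real)" p .
  have "lin_indpt {}" unfolding lin_dep_def by auto
  then obtain U where U: "finite U" "maximal U (\<lambda>T. T \<subseteq> set (cols H) \<and> lin_indpt T)"
    using maximal_exists_superset[of "set (cols H)" "\<lambda>T. T \<subseteq> set (cols H) \<and> lin_indpt T" "{}"]
    by blast
  have U_cols: "U \<subseteq> set (cols H)" "lin_indpt U" using U(2) unfolding maximal_def by auto
  have U_carrier: "U \<subseteq> carrier_vec p" using U_cols(1) H cols_dim by blast
  have "card U = p" using rank_card_indpt[OF H U(2)] rank by simp
  then have "basis U" using U(1) U_carrier U_cols dim_is_n by (intro dim_li_is_basis) auto
  then have span: "span U = carrier_vec p" unfolding basis_def by simp
  have "x \<in> orthogonal_complement U"
    unfolding orthogonal_complement_def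
    using x orth U_cols(1) U_carrier comm_scalar_prod[of _ p x] by fastforce
  then have "x \<in> orthogonal_complement (span U)" using in_orthogonal_complement_span[OF U_carrier] by simp
  then have "x \<bullet> x = 0" using x span unfolding orthogonal_complement_def by auto
  then show ?thesis using scalar_prod_self_eq_0_iff[OF x] by blast
qed

lemma set_cols_hblock:
  assumes "\<And>i. i \<in> {1..S} \<Longrightarrow> C i \<in> carrier_mat p (m i)"
  shows "set (cols (hblock p S C)) = (\<Union>i\<in>{1..S}. set (cols (C i)))"
proof -
  have L: "set (concat (map (\<lambda>i. cols (C i)) [1..<S+1])) = (\<Union>i\<in>{1..S}. set (cols (C i)))"
    by (simp del: upt_Suc add: atLeastLessThanSuc_atLeastAtMost)
  have "(\<Union>i\<in>{1..S}. set (cols (C i))) \<subseteq> carrier_vec p"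
  proof (rule UN_least)
    fix i assume "i \<in> {1..S}"
    then have "dim_row (C i) = p" using assms by blast
    then show "set (cols (C i)) \<subseteq> carrier_vec p" by (metis cols_dim)
  qed
  then show ?thesis unfolding hblock_def L[symmetric] by (subst cols_mat_of_cols) auto
qed

lemma hblock_transpose_kernel_trivial:
  assumes C: "\<And>i. i \<in> {1..S} \<Longrightarrow> C i \<in> carrier_mat p (m i)"
    and rank: "vec_space.rank p (hblock p S C) = p"
    and x: "x \<in> carrier_vec p" and Cx: "\<And>i. i \<in> {1..S} \<Longrightarrow> transpose_mat (C i) *\<^sub>v x = 0\<^sub>v (m i)"
  shows "x = 0\<^sub>v p"
proof -
  have "y \<bullet> x = 0" if y: "y \<in> set (cols (hblock p S C))" for y
  proof -
    have "y \<in> (\<Union>i\<in>{1..S}. set (cols (C i)))" using y set_cols_hblock[of S C p m] C by simp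
    then obtain i where i: "i \<in> {1..S}" "y \<in> set (cols (C i))" by blast
    then obtain c where c: "c < m i" "y = col (C i) c" using C[OF i(1)] unfolding cols_def by auto
    have "y \<bullet> x = (transpose_mat (C i) *\<^sub>v x) $ c" using c C[OF i(1)] by simp
    then show ?thesis using Cx[OF i(1)] c(1) by simp
  qed
  moreover have "hblock p S C \<in> carrier_mat p (length (concat (map (\<lambda>i. cols (C i)) [1..<S+1])))"
    unfolding hblock_def by simp
  ultimately show ?thesis using full_row_rank_orthogonal_imp_zero[OF _ rank x] by blast
qed

lemma hblock_transpose_coercive:
  assumes C: "\<And>i. i \<in> {1..S} \<Longrightarrow> C i \<in> carrier_mat p (m i)"
    and rank: "vec_space.rank p (hblock p S C) = p"
  shows "\<exists>c>0. \<forall>x\<in>carrier_vec p.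
    c * (x \<bullet> x) \<le> (\<Sum>i = 1..S. (transpose_mat (C i) *\<^sub>v x) \<bullet> (transpose_mat (C i) *\<^sub>v x))"
proof (rule homogeneous_coercive)
  fix x :: "real vec" assume x: "x \<in> carrier_vec p" "x \<noteq> 0\<^sub>v p"
  show "0 < (\<Sum>i = 1..S. (transpose_mat (C i) *\<^sub>v x) \<bullet> (transpose_mat (C i) *\<^sub>v x))"
  proof (rule ccontr)
    assume "\<not> ?thesis"
    moreover have "0 \<le> (\<Sum>i = 1..S. (transpose_mat (C i) *\<^sub>v x) \<bullet> (transpose_mat (C i) *\<^sub>v x))"
      by (intro sum_nonneg scalar_prod_self_nonneg)
    ultimately have "(\<Sum>i = 1..S. (transpose_mat (C i) *\<^sub>v x) \<bullet> (transpose_mat (C i) *\<^sub>v x)) = 0"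
      by linarith
    then have "\<forall>i\<in>{1..S}. (transpose_mat (C i) *\<^sub>v x) \<bullet> (transpose_mat (C i) *\<^sub>v x) = 0"
      by (subst (asm) sum_nonneg_eq_0_iff) (simp_all add: scalar_prod_self_nonneg)
    then have "transpose_mat (C i) *\<^sub>v x = 0\<^sub>v (m i)" if "i \<in> {1..S}" for i
      using that scalar_prod_self_eq_0_iff[of "transpose_mat (C i) *\<^sub>v x" "m i"] C[OF that] x(1) by simp
    then show False using hblock_transpose_kernel_trivial[OF C rank x(1)] x(2) by blast
  qed
next
  show "\<And>a x. x \<in> carrier_vec p \<Longrightarrow>
      (\<Sum>i = 1..S. (transpose_mat (C i) *\<^sub>v (a \<cdot>\<^sub>v x)) \<bullet> (transpose_mat (C i) *\<^sub>v (a \<cdot>\<^sub>v x)))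
      = a\<^sup>2 * (\<Sum>i = 1..S. (transpose_mat (C i) *\<^sub>v x) \<bullet> (transpose_mat (C i) *\<^sub>v x))"
    unfolding sum_distrib_left
    by (intro sum.cong refl mat_vec_scalar_prod_smult) (use C in auto)
  show "continuous_on UNIV (\<lambda>f. \<Sum>i = 1..S. (transpose_mat (C i) *\<^sub>v vec p f) \<bullet> (transpose_mat (C i) *\<^sub>v vec p f))"
    by (intro continuous_on_sum continuous_on_mat_vec_scalar_prod) (use C in auto)
qed

lemma sum_scalar_prod_transpose_eq_0:
  fixes C :: "'i \<Rightarrow> 'a :: comm_semiring_0 mat"
  assumes C: "\<And>i. i \<in> I \<Longrightarrow> C i \<in> carrier_mat p (m i)"
    and v: "\<And>i. i \<in> I \<Longrightarrow> v i \<in> carrier_vec (m i)"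
    and y: "y \<in> carrier_vec p"
    and constraint: "\<And>r. r < p \<Longrightarrow> (\<Sum>i\<in>I. (C i *\<^sub>v v i) $ r) = 0"
  shows "(\<Sum>i\<in>I. v i \<bullet> (transpose_mat (C i) *\<^sub>v y)) = 0"
proof -
  have "v i \<bullet> (transpose_mat (C i) *\<^sub>v y) = (\<Sum>r<p. y $ r * (C i *\<^sub>v v i) $ r)" if i: "i \<in> I" for i
  proof -
    have "v i \<bullet> (transpose_mat (C i) *\<^sub>v y) = (transpose_mat (C i) *\<^sub>v y) \<bullet> v i"
      using C[OF i] v[OF i] y by (simp add: comm_scalar_prod[of "v i" "m i"])
    also have "\<dots> = y \<bullet> (C i *\<^sub>v v i)" by (rule transpose_vec_mult_scalar[OF C[OF i] v[OF i] y])
    finally show ?thesis using C[OF i] unfolding scalar_prod_def lessThan_atLeast0 by simp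
  qed
  then have "(\<Sum>i\<in>I. v i \<bullet> (transpose_mat (C i) *\<^sub>v y)) = (\<Sum>i\<in>I. \<Sum>r<p. y $ r * (C i *\<^sub>v v i) $ r)"
    by (rule sum.cong[OF refl])
  also have "\<dots> = (\<Sum>r<p. y $ r * (\<Sum>i\<in>I. (C i *\<^sub>v v i) $ r))"
    by (simp add: sum.swap[of _ I] sum_distrib_left)
  also have "\<dots> = 0" using constraint by simp
  finally show ?thesis .
qed

section \<open>Energy estimate for the \<open>v\<close>-continuity scheme\<close>

text \<open>Obtained by testing the dynamic equations of both steps against both velocities.\<close>
lemma v_continuity_energy_identity:
  fixes M K :: "real mat" and v0 v1 d0 d1 f0 f1 :: "real vec"
  assumes M: "M \<in> carrier_mat n n" "transpose_mat M = M"
    and K: "K \<in> carrier_mat n n" "transpose_mat K = K"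
    and v0: "v0 \<in> carrier_vec n" and v1: "v1 \<in> carrier_vec n" and d0: "d0 \<in> carrier_vec n"
    and eq0: "M *\<^sub>v v0 + K *\<^sub>v d0 = f0" and eq1: "M *\<^sub>v v1 + K *\<^sub>v d1 = f1"
    and upd: "d1 = d0 + \<Delta>t \<cdot>\<^sub>v ((1 - \<gamma>) \<cdot>\<^sub>v v0 + \<gamma> \<cdot>\<^sub>v v1)"
  shows "(v1 \<bullet> (M *\<^sub>v v1) - (1/2 - \<gamma>) * \<Delta>t * (v1 \<bullet> (K *\<^sub>v v1)))
       - (v0 \<bullet> (M *\<^sub>v v0) - (1/2 - \<gamma>) * \<Delta>t * (v0 \<bullet> (K *\<^sub>v v0)))
       + \<Delta>t / 2 * ((v0 + v1) \<bullet> (K *\<^sub>v (v0 + v1)))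
     = (v0 \<bullet> f1 - v0 \<bullet> f0) + (v1 \<bullet> f1 - v1 \<bullet> f0)"
proof -
  have Kd1: "K *\<^sub>v d1 = K *\<^sub>v d0 + \<Delta>t \<cdot>\<^sub>v ((1 - \<gamma>) \<cdot>\<^sub>v (K *\<^sub>v v0) + \<gamma> \<cdot>\<^sub>v (K *\<^sub>v v1))"
    unfolding upd using K v0 v1 d0
    by (simp add: mult_add_distrib_mat_vec[OF K(1)] mult_mat_vec[OF K(1)])
  have f0: "z \<bullet> f0 = z \<bullet> (M *\<^sub>v v0) + z \<bullet> (K *\<^sub>v d0)" if "z \<in> carrier_vec n" for z
    unfolding eq0[symmetric] using that M K v0 d0 by (simp add: scalar_prod_add_distrib[of _ n])
  have f1: "z \<bullet> f1 = z \<bullet> (M *\<^sub>v v1) + z \<bullet> (K *\<^sub>v d0)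
      + \<Delta>t * ((1 - \<gamma>) * (z \<bullet> (K *\<^sub>v v0)) + \<gamma> * (z \<bullet> (K *\<^sub>v v1)))" if "z \<in> carrier_vec n" for z
    unfolding eq1[symmetric] Kd1 using that M K v0 v1 d0
    by (simp add: scalar_prod_add_distrib[of _ n] algebra_simps)
  have "(v0 + v1) \<bullet> (K *\<^sub>v (v0 + v1)) = v0 \<bullet> (K *\<^sub>v v0) + 2 * (v1 \<bullet> (K *\<^sub>v v0)) + v1 \<bullet> (K *\<^sub>v v1)"
    using quadratic_form_add_smult[OF K v0 v1, of 1] v1 by simp
  then show ?thesis
    using f0[OF v0] f0[OF v1] f1[OF v0] f1[OF v1]
      symmetric_bilinear_swap[OF M v0 v1] symmetric_bilinear_swap[OF K v0 v1]
    by (simp add: algebra_simps)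
qed

locale v_continuity_scheme =
  fixes S p :: nat and m :: "nat \<Rightarrow> nat"
    and M K C :: "nat \<Rightarrow> real mat"
    and \<gamma> \<Delta>t :: real
    and d v :: "nat \<Rightarrow> nat \<Rightarrow> real vec"
    and lam :: "nat \<Rightarrow> real vec"
  assumes dimM: "\<And>i. i \<in> {1..S} \<Longrightarrow> M i \<in> carrier_mat (m i) (m i)"
    and dimK: "\<And>i. i \<in> {1..S} \<Longrightarrow> K i \<in> carrier_mat (m i) (m i)"
    and dimC: "\<And>i. i \<in> {1..S} \<Longrightarrow> C i \<in> carrier_mat p (m i)"
    and Mspd: "\<And>i. i \<in> {1..S} \<Longrightarrow> sym_pos_def (M i)"
    and Kspsd: "\<And>i. i \<in> {1..S} \<Longrightarrow> sym_pos_semidef (K i)"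
    and Crank: "vec_space.rank p (hblock p S C) = p"
    and gam: "0 \<le> \<gamma>" "\<gamma> \<le> 1"
    and dt: "\<Delta>t > 0"
    and stab: "\<gamma> < 1/2 \<Longrightarrow> (\<forall>i \<in> {1..S}. \<Delta>t * (1 - 2*\<gamma>) * omega_max (K i) (M i) < 2)"
    and dimd: "\<And>i n. i \<in> {1..S} \<Longrightarrow> d i n \<in> carrier_vec (m i)"
    and dimv: "\<And>i n. i \<in> {1..S} \<Longrightarrow> v i n \<in> carrier_vec (m i)"
    and diml: "\<And>n. lam n \<in> carrier_vec p"
    and eq1: "\<And>i n. i \<in> {1..S} \<Longrightarrow>
               M i *\<^sub>v v i n + K i *\<^sub>v d i n = transpose_mat (C i) *\<^sub>v lam n"
    and eq2: "\<And>n r. r < p \<Longrightarrow> (\<Sum>i = 1..S. (C i *\<^sub>v v i n) $ r) = 0"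
    and upd: "\<And>i n. i \<in> {1..S} \<Longrightarrow>
               d i (Suc n) = d i n + \<Delta>t \<cdot>\<^sub>v ((1 - \<gamma>) \<cdot>\<^sub>v v i n + \<gamma> \<cdot>\<^sub>v v i (Suc n))"
begin

definition energy_form :: "nat \<Rightarrow> real vec \<Rightarrow> real" where
  "energy_form i x = x \<bullet> (M i *\<^sub>v x) - (1/2 - \<gamma>) * \<Delta>t * (x \<bullet> (K i *\<^sub>v x))"

definition energy :: "nat \<Rightarrow> real" where
  "energy n = (\<Sum>i = 1..S. energy_form i (v i n))"

lemma energy_form_coercive:
  assumes "i \<in> {1..S}"
  shows "\<exists>c>0. \<forall>x\<in>carrier_vec (m i). c * (x \<bullet> x) \<le> energy_form i x"
  unfolding energy_form_def
proof (rule stable_energy_form_coercive[OF dimM[OF assms] dimK[OF assms] Mspd[OF assms] Kspsd[OF assms]])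
  assume "0 < (1/2 - \<gamma>) * \<Delta>t"
  then have "\<gamma> < 1/2" using dt by (simp add: zero_less_mult_iff)
  then have "\<Delta>t * (1 - 2 * \<gamma>) * omega_max (K i) (M i) < 2" using stab assms by blast
  then show "(1/2 - \<gamma>) * \<Delta>t * omega_max (K i) (M i) < 1" by (simp add: algebra_simps)
qed

lemma energy_form_nonneg: "i \<in> {1..S} \<Longrightarrow> x \<in> carrier_vec (m i) \<Longrightarrow> 0 \<le> energy_form i x"
  using energy_form_coercive scalar_prod_self_nonneg
  by (meson less_imp_le mult_nonneg_nonneg order_trans)

lemma energy_Suc_le: "energy (Suc n) \<le> energy n"
proof -
  define work where "work i k l = v i k \<bullet> (transpose_mat (C i) *\<^sub>v lam l)" for i k l
  define dissipation where
    "dissipation i = (v i n + v i (Suc n)) \<bullet> (K i *\<^sub>v (v i n + v i (Suc n)))" for i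
  have step: "energy_form i (v i (Suc n)) - energy_form i (v i n) + \<Delta>t / 2 * dissipation i
      = (work i n (Suc n) - work i n n) + (work i (Suc n) (Suc n) - work i (Suc n) n)"
    if i: "i \<in> {1..S}" for i
    unfolding energy_form_def dissipation_def work_def
    using Mspd[OF i] Kspsd[OF i] dimM[OF i] dimK[OF i] dimv[OF i] dimd[OF i]
    by (intro v_continuity_energy_identity[OF _ _ _ _ _ _ _ eq1[OF i] eq1[OF i] upd[OF i]])
      (auto simp: sym_pos_def_def sym_pos_semidef_def symmetric_mat_def)
  have "energy (Suc n) - energy n + \<Delta>t / 2 * (\<Sum>i = 1..S. dissipation i)
      = (\<Sum>i = 1..S. (work i n (Suc n) - work i n n) + (work i (Suc n) (Suc n) - work i (Suc n) n))"
    unfolding energy_def sum_distrib_left sum_subtractf[symmetric] sum.distrib[symmetric]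
    by (rule sum.cong[OF refl]) (rule step)
  also have "\<dots> = 0"
    unfolding sum.distrib sum_subtractf work_def
    using sum_scalar_prod_transpose_eq_0[OF dimC dimv diml eq2] by simp
  finally have "energy (Suc n) - energy n = - (\<Delta>t / 2 * (\<Sum>i = 1..S. dissipation i))" by simp
  moreover have "0 \<le> (\<Sum>i = 1..S. dissipation i)"
  proof (rule sum_nonneg)
    fix i assume i: "i \<in> {1..S}"
    have "v i n + v i (Suc n) \<in> carrier_vec (m i)" using dimv[OF i] by simp
    then show "0 \<le> dissipation i"
      using Kspsd[OF i] dimK[OF i] unfolding dissipation_def sym_pos_semidef_def by auto
  qed
  then have "0 \<le> \<Delta>t / 2 * (\<Sum>i = 1..S. dissipation i)" using dt by simp
  ultimately show ?thesis by linarith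
qed

lemma energy_le_initial: "energy n \<le> energy 0"
  by (induction n) (auto intro: order_trans[OF energy_Suc_le])

lemma velocity_bounded:
  assumes i: "i \<in> {1..S}"
  shows "\<exists>B. \<forall>n. v i n \<bullet> v i n \<le> B"
proof -
  obtain c where c: "c > 0" "\<And>x. x \<in> carrier_vec (m i) \<Longrightarrow> c * (x \<bullet> x) \<le> energy_form i x"
    using energy_form_coercive[OF i] by blast
  have "c * (v i n \<bullet> v i n) \<le> energy 0" for n
  proof -
    have "c * (v i n \<bullet> v i n) \<le> energy_form i (v i n)" using c(2) dimv[OF i] by blast
    also have "\<dots> \<le> energy n"
      unfolding energy_def using i energy_form_nonneg dimv by (intro member_le_sum) auto
    also have "\<dots> \<le> energy 0" by (rule energy_le_initial)
    finally show ?thesis .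
  qed
  then show ?thesis using c(1) by (intro exI[of _ "energy 0 / c"]) (simp add: field_simps)
qed

lemma displacement_increment:
  assumes "i \<in> {1..S}"
  shows "d i (Suc n) - d i n = \<Delta>t \<cdot>\<^sub>v ((1 - \<gamma>) \<cdot>\<^sub>v v i n + \<gamma> \<cdot>\<^sub>v v i (Suc n))"
  unfolding upd[OF assms, of n]
  using dimd[OF assms, of n] dimv[OF assms, of n] dimv[OF assms, of "Suc n"] by (intro eq_vecI) auto

lemma displacement_increment_bounded:
  assumes i: "i \<in> {1..S}"
  shows "\<exists>B. \<forall>n. (d i (Suc n) - d i n) \<bullet> (d i (Suc n) - d i n) \<le> B"
proof -
  obtain B where B: "\<And>n. v i n \<bullet> v i n \<le> B" using velocity_bounded[OF i] by blast
  have "(d i (Suc n) - d i n) \<bullet> (d i (Suc n) - d i n) \<le> \<Delta>t\<^sup>2 * (4 * B)" for n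
  proof -
    define w where "w = (1 - \<gamma>) \<cdot>\<^sub>v v i n + \<gamma> \<cdot>\<^sub>v v i (Suc n)"
    have w: "w \<in> carrier_vec (m i)" using dimv[OF i] unfolding w_def by simp
    have "w \<bullet> w \<le> 2 * ((1 - \<gamma>)\<^sup>2 * (v i n \<bullet> v i n)) + 2 * (\<gamma>\<^sup>2 * (v i (Suc n) \<bullet> v i (Suc n)))"
      using scalar_prod_add_self_le[of "(1 - \<gamma>) \<cdot>\<^sub>v v i n" "m i" "\<gamma> \<cdot>\<^sub>v v i (Suc n)"] dimv[OF i]
      unfolding w_def by (simp add: power2_eq_square)
    also have "\<dots> \<le> 2 * (1 * B) + 2 * (1 * B)"
      using gam B[of n] B[of "Suc n"] scalar_prod_self_nonneg
      by (intro add_mono mult_left_mono mult_mono) (auto simp: abs_square_le_1)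
    finally have "w \<bullet> w \<le> 4 * B" by simp
    then have "\<Delta>t\<^sup>2 * (w \<bullet> w) \<le> \<Delta>t\<^sup>2 * (4 * B)" by (simp add: mult_left_mono)
    then show ?thesis
      using displacement_increment[OF i, of n] w unfolding w_def[symmetric]
      by (simp add: power2_eq_square mult.assoc)
  qed
  then show ?thesis by blast
qed

lemma transpose_multiplier_increment:
  assumes i: "i \<in> {1..S}"
  shows "transpose_mat (C i) *\<^sub>v (lam (Suc n) - lam n)
    = M i *\<^sub>v (v i (Suc n) - v i n) + K i *\<^sub>v (d i (Suc n) - d i n)"
proof -
  have "transpose_mat (C i) \<in> carrier_mat (m i) p" using dimC[OF i] by simp
  then have "transpose_mat (C i) *\<^sub>v (lam (Suc n) - lam n)
      = (M i *\<^sub>v v i (Suc n) + K i *\<^sub>v d i (Suc n)) - (M i *\<^sub>v v i n + K i *\<^sub>v d i n)"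
    using eq1[OF i] diml by (simp add: mult_minus_distrib_mat_vec)
  also have "\<dots> = M i *\<^sub>v (v i (Suc n) - v i n) + K i *\<^sub>v (d i (Suc n) - d i n)"
    using dimM[OF i] dimK[OF i] dimv[OF i] dimd[OF i]
    by (intro eq_vecI) (auto simp: mult_minus_distrib_mat_vec)
  finally show ?thesis .
qed

lemma transpose_multiplier_increment_bounded:
  assumes i: "i \<in> {1..S}"
  shows "\<exists>B. \<forall>n. (transpose_mat (C i) *\<^sub>v (lam (Suc n) - lam n))
    \<bullet> (transpose_mat (C i) *\<^sub>v (lam (Suc n) - lam n)) \<le> B"
proof -
  obtain Bv where Bv: "\<And>n. v i n \<bullet> v i n \<le> Bv" using velocity_bounded[OF i] by blast
  obtain Bd where Bd: "\<And>n. (d i (Suc n) - d i n) \<bullet> (d i (Suc n) - d i n) \<le> Bd"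
    using displacement_increment_bounded[OF i] by blast
  obtain cM where cM: "cM \<ge> 0" "\<And>x. x \<in> carrier_vec (m i) \<Longrightarrow> (M i *\<^sub>v x) \<bullet> (M i *\<^sub>v x) \<le> cM * (x \<bullet> x)"
    using mat_vec_norm_bound[OF dimM[OF i]] by blast
  obtain cK where cK: "cK \<ge> 0" "\<And>x. x \<in> carrier_vec (m i) \<Longrightarrow> (K i *\<^sub>v x) \<bullet> (K i *\<^sub>v x) \<le> cK * (x \<bullet> x)"
    using mat_vec_norm_bound[OF dimK[OF i]] by blast
  have "(transpose_mat (C i) *\<^sub>v (lam (Suc n) - lam n)) \<bullet> (transpose_mat (C i) *\<^sub>v (lam (Suc n) - lam n))
      \<le> 2 * (cM * (4 * Bv)) + 2 * (cK * Bd)" for n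
  proof -
    define \<delta>v where "\<delta>v = v i (Suc n) - v i n"
    define \<delta>d where "\<delta>d = d i (Suc n) - d i n"
    have \<delta>: "\<delta>v \<in> carrier_vec (m i)" "\<delta>d \<in> carrier_vec (m i)"
      using dimv[OF i] dimd[OF i] unfolding \<delta>v_def \<delta>d_def by auto
    have "\<delta>v \<bullet> \<delta>v \<le> 4 * Bv"
      using scalar_prod_diff_self_le[OF dimv[OF i] dimv[OF i], of "Suc n" n] Bv[of n] Bv[of "Suc n"]
      unfolding \<delta>v_def by linarith
    then have "cM * (\<delta>v \<bullet> \<delta>v) \<le> cM * (4 * Bv)" using cM(1) by (rule mult_left_mono)
    then have "(M i *\<^sub>v \<delta>v) \<bullet> (M i *\<^sub>v \<delta>v) \<le> cM * (4 * Bv)" using cM(2)[OF \<delta>(1)] by linarith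
    moreover have "cK * (\<delta>d \<bullet> \<delta>d) \<le> cK * Bd" using Bd[of n] cK(1) unfolding \<delta>d_def by (rule mult_left_mono)
    then have "(K i *\<^sub>v \<delta>d) \<bullet> (K i *\<^sub>v \<delta>d) \<le> cK * Bd" using cK(2)[OF \<delta>(2)] by linarith
    moreover have "(M i *\<^sub>v \<delta>v + K i *\<^sub>v \<delta>d) \<bullet> (M i *\<^sub>v \<delta>v + K i *\<^sub>v \<delta>d)
        \<le> 2 * ((M i *\<^sub>v \<delta>v) \<bullet> (M i *\<^sub>v \<delta>v)) + 2 * ((K i *\<^sub>v \<delta>d) \<bullet> (K i *\<^sub>v \<delta>d))"
      using dimM[OF i] dimK[OF i] \<delta> by (intro scalar_prod_add_self_le[of _ "m i"]) auto
    ultimately show ?thesis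
      unfolding transpose_multiplier_increment[OF i] \<delta>v_def[symmetric] \<delta>d_def[symmetric] by linarith
  qed
  then show ?thesis by blast
qed

lemma multiplier_increment_bounded:
  "\<exists>B. \<forall>n. (lam (Suc n) - lam n) \<bullet> (lam (Suc n) - lam n) \<le> B"
proof -
  have "\<forall>i\<in>{1..S}. \<exists>B. \<forall>n. (transpose_mat (C i) *\<^sub>v (lam (Suc n) - lam n))
      \<bullet> (transpose_mat (C i) *\<^sub>v (lam (Suc n) - lam n)) \<le> B"
    using transpose_multiplier_increment_bounded by blast
  from bchoice[OF this] obtain B where B: "\<forall>i\<in>{1..S}. \<forall>n. (transpose_mat (C i) *\<^sub>v (lam (Suc n) - lam n))
      \<bullet> (transpose_mat (C i) *\<^sub>v (lam (Suc n) - lam n)) \<le> B i" ..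
  obtain c where c: "c > 0" "\<And>x. x \<in> carrier_vec p \<Longrightarrow>
      c * (x \<bullet> x) \<le> (\<Sum>i = 1..S. (transpose_mat (C i) *\<^sub>v x) \<bullet> (transpose_mat (C i) *\<^sub>v x))"
    using hblock_transpose_coercive[OF dimC Crank] by blast
  have "c * ((lam (Suc n) - lam n) \<bullet> (lam (Suc n) - lam n)) \<le> (\<Sum>i = 1..S. B i)" for n
  proof -
    have "lam (Suc n) - lam n \<in> carrier_vec p" using diml by simp
    from c(2)[OF this] have "c * ((lam (Suc n) - lam n) \<bullet> (lam (Suc n) - lam n))
        \<le> (\<Sum>i = 1..S. (transpose_mat (C i) *\<^sub>v (lam (Suc n) - lam n))
              \<bullet> (transpose_mat (C i) *\<^sub>v (lam (Suc n) - lam n)))" .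
    also have "\<dots> \<le> (\<Sum>i = 1..S. B i)" using B by (intro sum_mono) blast
    finally show ?thesis .
  qed
  then have "(lam (Suc n) - lam n) \<bullet> (lam (Suc n) - lam n) \<le> (\<Sum>i = 1..S. B i) / c" for n
    using c(1) by (simp add: pos_le_divide_eq mult.commute)
  then show ?thesis by blast
qed

end

theorem mainTheorem4:
  fixes S p :: nat and m :: "nat \<Rightarrow> nat"
    and M K C :: "nat \<Rightarrow> real mat"
    and \<gamma> \<Delta>t :: real
    and d v :: "nat \<Rightarrow> nat \<Rightarrow> real vec" \<comment> \<open>d i n, v i n\<close>
    and lam :: "nat \<Rightarrow> real vec"
  assumes S: "S \<ge> 1"
    and dimM: "\<And>i. i \<in> {1..S} \<Longrightarrow> M i \<in> carrier_mat (m i) (m i)"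
    and dimK: "\<And>i. i \<in> {1..S} \<Longrightarrow> K i \<in> carrier_mat (m i) (m i)"
    and dimC: "\<And>i. i \<in> {1..S} \<Longrightarrow> C i \<in> carrier_mat p (m i)"
    and Mspd: "\<And>i. i \<in> {1..S} \<Longrightarrow> sym_pos_def (M i)"
    and Kspsd: "\<And>i. i \<in> {1..S} \<Longrightarrow> sym_pos_semidef (K i)"
    and Cbool: "\<And>i. i \<in> {1..S} \<Longrightarrow> signed_boolean (C i)"
    and Crank: "vec_space.rank p (hblock p S C) = p"
    and gam: "0 \<le> \<gamma>" "\<gamma> \<le> 1"
    and dt: "\<Delta>t > 0"
    and stab: "\<gamma> < 1/2 \<Longrightarrow> (\<forall>i \<in> {1..S}. \<Delta>t * (1 - 2*\<gamma>) * omega_max (K i) (M i) < 2)"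
    and dimd: "\<And>i n. i \<in> {1..S} \<Longrightarrow> d i n \<in> carrier_vec (m i)"
    and dimv: "\<And>i n. i \<in> {1..S} \<Longrightarrow> v i n \<in> carrier_vec (m i)"
    and diml: "\<And>n. lam n \<in> carrier_vec p"
    and eq1: "\<And>i n. i \<in> {1..S} \<Longrightarrow>
               M i *\<^sub>v v i n + K i *\<^sub>v d i n = transpose_mat (C i) *\<^sub>v lam n"
    and eq2: "\<And>n r. r < p \<Longrightarrow> (\<Sum>i = 1..S. (C i *\<^sub>v v i n) $ r) = 0"
    and upd: "\<And>i n. i \<in> {1..S} \<Longrightarrow>
               d i (Suc n) = d i n + \<Delta>t \<cdot>\<^sub>v ((1 - \<gamma>) \<cdot>\<^sub>v v i n + \<gamma> \<cdot>\<^sub>v v i (Suc n))"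
  shows "(\<forall>i \<in> {1..S}. bounded_seq (\<lambda>n. v i n) \<and> bounded_seq (\<lambda>n. d i (Suc n) - d i n))
         \<and> bounded_seq (\<lambda>n. lam (Suc n) - lam n)"
proof -
  interpret v_continuity_scheme S p m M K C \<gamma> \<Delta>t d v lam
    by unfold_locales (fact assms)+
  have "bounded_seq (\<lambda>n. v i n)" "bounded_seq (\<lambda>n. d i (Suc n) - d i n)" if "i \<in> {1..S}" for i
    using velocity_bounded[OF that] displacement_increment_bounded[OF that]
    by (simp_all add: bounded_seq_if_scalar_prod_bounded)
  moreover have "bounded_seq (\<lambda>n. lam (Suc n) - lam n)"
    using multiplier_increment_bounded by (rule bounded_seq_if_scalar_prod_bounded)
  ultimately show ?thesis by blast
qed

end
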